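(* Let $\text{rank}[\mathbf{A}_{12}] = q$. Then the system $$\dot{\hat{\mathbf{z}}}_2(t) = [\mathbf{A}_{22} - \mathbf{L}\mathbf{A}_{12}]\hat{\mathbf{z}}_2(t) + \mathbf{L}\mathbf{y}_1(t) + \mathbf{D}\mathbf{u}_1(t) + \mathbf{F}\boldsymbol{\omega}(t), \qquad \dot{\boldsymbol{\omega}}(t) = \mathbf{G}[\mathbf{y}_1(t) - \mathbf{A}_{12}\hat{\mathbf{z}}_2(t)]$$ is a reduced order proportional-integral observer for the system $\dot{\mathbf{x}}(t) = \mathbf{A}\mathbf{x}(t) + \mathbf{B}\mathbf{u}(t)$, $\mathbf{y}(t) = \mathbf{C}\mathbf{x}(t)$ only if the following conditions hold: (a) $\text{rank}[\mathbf{G}] = k$; (b) $q \geq k$.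
   Context: Consider the continuous-time LTI system $\dot{\mathbf{x}}(t) = \mathbf{A}\mathbf{x}(t) + \mathbf{B}\mathbf{u}(t)$, $\mathbf{y}(t) = \mathbf{C}\mathbf{x}(t)$ with real matrices $\mathbf{A}$ ($n\times n$), $\mathbf{B}$ ($n\times m$), $\mathbf{C}$ ($p\times n$), $\text{rank}[\mathbf{C}]=p$. Let $\mathbf{T}$ be a nonsingular real $n\times n$ matrix with $\mathbf{C}\mathbf{T}=[\mathbf{I}_p,\mathbf{0}]$, and write $\mathbf{T}^{-1}\mathbf{A}\mathbf{T} = \begin{bmatrix}\mathbf{A}_{11} & \mathbf{A}_{12}\\ \mathbf{A}_{21} & \mathbf{A}_{22}\end{bmatrix}$, $\mathbf{T}^{-1}\mathbf{B} = \begin{bmatrix}\mathbf{G}_1\\ \mathbf{G}_2\end{bmatrix}$, where $\mathbf{A}_{12}$ is $p\times(n-p)$ and $\mathbf{A}_{22}$ is $(n-p)\times(n-p)$; $\mathbf{z}=\mathbf{T}^{-1}\mathbf{x} = [\mathbf{z}_1;\mathbf{z}_2]$ with $\mathbf{z}_1=\mathbf{y}$ and $\mathbf{z}_2$ of size $(n-p)$. Define $\mathbf{u}_1(t)=[\mathbf{y}(t);\mathbf{u}(t)]$, $\mathbf{y}_1(t)=\dot{\mathbf{y}}(t)-\mathbf{A}_{11}\mathbf{y}(t)-\mathbf{G}_1\mathbf{u}(t)$, $\mathbf{D}=[\mathbf{A}_{21},\mathbf{G}_2]$, so that $\dot{\mathbf{z}}_2 = \mathbf{A}_{22}\mathbf{z}_2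 + \mathbf{D}\mathbf{u}_1$, $\mathbf{y}_1=\mathbf{A}_{12}\mathbf{z}_2$. In the observer, $\hat{\mathbf{z}}_2(t)$ has size $(n-p)$, $\boldsymbol{\omega}(t)$ has size $k$, and $\mathbf{L}$, $\mathbf{F}$, $\mathbf{G}$ are real matrices of size $(n-p)\times p$, $(n-p)\times k$, $k\times p$. The observer is called a reduced order proportional-integral observer if for arbitrary initial conditions and any input, $\hat{\mathbf{z}}_2(t)-\mathbf{z}_2(t)\to\mathbf{0}$ and $\boldsymbol{\omega}(t)\to\mathbf{0}$ as $t\to\infty$; equivalently, the matrix $\begin{bmatrix}\mathbf{A}_{22}-\mathbf{L}\mathbf{A}_{12} & \mathbf{F}\\ -\mathbf{G}\mathbf{A}_{12} & \mathbf{0}\end{bmatrix}$ is Hurwitz stable (all eigenvalues have negative real parts). *)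

theory Defs
  imports "Jordan_Normal_Form.Jordan_Normal_Form" "Jordan_Normal_Form.DL_Rank"
begin

definition mat_rank :: "real mat \<Rightarrow> nat" where
  "mat_rank M = vec_space.rank (dim_row M) M"

definition hurwitz :: "real mat \<Rightarrow> bool" where
  "hurwitz M \<longleftrightarrow> (\<forall>ev. eigenvalue (map_mat complex_of_real M) ev \<longrightarrow> Re ev < 0)"

(* Error-dynamics matrix of the reduced order PI observer, k = size of omega. *)
definition pi_observer_matrix ::
  "real mat \<Rightarrow> real mat \<Rightarrow> real mat \<Rightarrow> real mat \<Rightarrow> real mat \<Rightarrow> real mat" where
  "pi_observer_matrix A12 A22 L F G =
     four_block_mat (A22 - L * A12) F (- (G * A12)) (0\<^sub>m (dim_row G) (dim_row G))"

(* The observer is a reduced order PI observer iff the error matrix is Hurwitz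
   (the characterization given in the paper's definition). *)
definition RO_PI_observer ::
  "real mat \<Rightarrow> real mat \<Rightarrow> real mat \<Rightarrow> real mat \<Rightarrow> real mat \<Rightarrow> bool" where
  "RO_PI_observer A12 A22 L F G \<longleftrightarrow> hurwitz (pi_observer_matrix A12 A22 L F G)"

end

theory Submission imports Defs begin

text \<open>A Hurwitz matrix is invertible, since 0 is not one of its eigenvalues. If the error matrix
  \<open>M = [A22 - L A12, F; -G A12, 0]\<close> of the observer has an inverse \<open>N\<close>, then, because the lower
  right block of \<open>M\<close> vanishes, comparing the lower right blocks of \<open>M N = 1\<close> gives
  \<open>G (A12 X) = 1\<^sub>k\<close> for some \<open>X\<close>. Hence \<open>G\<close> has a right inverse, so it has rank \<open>k\<close>,
  and \<open>A12 X\<close> has a left inverse, so it has rank \<open>k\<close>; its columns lie in the column space of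
  \<open>A12\<close>, so \<open>k \<le> rank A12\<close>.\<close>

lemma (in vec_space) rank_le_of_cols_subset_span:
  assumes A: "A \<in> carrier_mat n nc" and B: "B \<in> carrier_mat n nb"
    and sub: "set (cols B) \<subseteq> span (set (cols A))"
  shows "rank B \<le> rank A"
proof -
  define W where "W = span (set (cols A))"
  have sW: "subspace class_ring W V"
    unfolding W_def using A cols_dim carrier_matD(1) span_is_subspace by metis
  have sB: "subspace class_ring (span (set (cols B))) V"
    using B cols_dim carrier_matD(1) span_is_subspace by metis
  have "span (set (cols B)) \<subseteq> W"
    using sub sW unfolding W_def subspace_def by (meson span_is_subset)
  then have sub2: "subspace class_ring (span (set (cols B))) (vs W)"
    using nested_subspaces[OF sW sB] by blast
  have fW: "vectorspace.fin_dim class_ring (vs W)"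
    unfolding W_def using A fin_dim_span_cols by blast
  have fB: "vectorspace.fin_dim class_ring (span_vs (set (cols B)))"
    using B fin_dim_span_cols by blast
  show ?thesis unfolding rank_def
    using vectorspace.subspace_dim[OF subspace_is_vs[OF sW] sub2 fW] fB unfolding W_def by auto
qed

lemma (in vec_space) rank_mult_le:
  assumes A: "A \<in> carrier_mat n nc" and B: "B \<in> carrier_mat nc nb"
  shows "rank (A * B) \<le> rank A"
proof (rule rank_le_of_cols_subset_span[OF A])
  show "A * B \<in> carrier_mat n nb" using A B by auto
  show "set (cols (A * B)) \<subseteq> span (set (cols A))"
  proof
    fix x assume "x \<in> set (cols (A * B))"
    then obtain j where j: "j < nb" and x: "x = col (A * B) j"
      using A B by (auto simp: cols_def)
    have "x = A *\<^sub>v col B j" using x col_mult2[OF A B j] by simp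
    moreover have "col B j \<in> carrier_vec nc" using B j by auto
    ultimately show "x \<in> span (set (cols A))"
      using col_space_eq[OF A] A unfolding col_space_def by auto
  qed
qed

lemma (in vec_space) rank_one_mat: "rank (1\<^sub>m n) = n"
  using det_rank_iff[of "1\<^sub>m n"] by auto

lemma (in vec_space) rank_le_nr:
  assumes A: "A \<in> carrier_mat n nc"
  shows "rank A \<le> n"
  using rank_mult_le[OF one_carrier_mat A] A by (simp add: rank_one_mat)

lemma (in vec_space) rank_right_invertible:
  assumes A: "A \<in> carrier_mat n nc" and B: "B \<in> carrier_mat nc n"
    and AB: "A * B = 1\<^sub>m n"
  shows "rank A = n"
  using rank_mult_le[OF A B] rank_le_nr[OF A] by (simp add: AB rank_one_mat)

lemma (in vec_space) rank_left_invertible: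
  assumes Y: "Y \<in> carrier_mat n k" and G: "G \<in> carrier_mat k n"
    and GY: "G * Y = 1\<^sub>m k"
  shows "rank Y = k"
proof -
  have inj: "v = 0\<^sub>v k" if v: "v \<in> carrier_vec k" and Yv: "Y *\<^sub>v v = 0\<^sub>v n" for v
  proof -
    have "v = (G * Y) *\<^sub>v v" using GY v by auto
    also have "\<dots> = G *\<^sub>v (Y *\<^sub>v v)" using assoc_mult_mat_vec[OF G Y v] .
    also have "\<dots> = 0\<^sub>v k" using Yv G by auto
    finally show ?thesis .
  qed
  have dist: "distinct (cols Y)"
  proof (rule ccontr)
    assume "\<not> distinct (cols Y)"
    then obtain i j where ij: "i \<noteq> j" "i < k" "j < k" "col Y i = col Y j"
      using Y by (auto simp: distinct_conv_nth cols_def)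
    have "col (G * Y) i $ i = col (G * Y) j $ i" using ij col_mult2[OF G Y] by simp
    then show False using ij GY by simp
  qed
  have "lin_indpt (set (cols Y))"
  proof
    assume "lin_dep (set (cols Y))"
    then obtain v where "v \<in> carrier_vec k" "v \<noteq> 0\<^sub>v k" "Y *\<^sub>v v = 0\<^sub>v n"
      using lin_depE[OF Y _ dist] by blast
    then show False using inj by blast
  qed
  then show ?thesis using lin_indpt_full_rank[OF Y dist] by blast
qed

lemma hurwitz_imp_det_nonzero:
  assumes M: "M \<in> carrier_mat n n" and hur: "hurwitz M"
  shows "det M \<noteq> 0"
proof
  assume "det M = 0"
  define Mc where "Mc = map_mat complex_of_real M"
  have Mc: "Mc \<in> carrier_mat n n" unfolding Mc_def using M by auto
  have "char_matrix Mc 0 = Mc" using Mc by (auto simp: char_matrix_def intro!: eq_matI)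
  with \<open>det M = 0\<close> have "det (char_matrix Mc 0) = 0" unfolding Mc_def by (simp add: of_real_hom.hom_det)
  then have "eigenvalue Mc 0" using eigenvalue_det[OF Mc] by simp
  then show False using hur unfolding hurwitz_def Mc_def by force
qed

lemma split_block_four_block_mat:
  assumes "A \<in> carrier_mat nr1 nc1" "B \<in> carrier_mat nr1 nc2"
    and "C \<in> carrier_mat nr2 nc1" "D \<in> carrier_mat nr2 nc2"
  shows "split_block (four_block_mat A B C D) nr1 nc1 = (A, B, C, D)"
  using assms unfolding split_block_def Let_def by (auto intro!: eq_matI)

lemma lower_left_block_right_invertible:
  fixes P :: "'a :: field mat"
  assumes P: "P \<in> carrier_mat r r" and F: "F \<in> carrier_mat r k" and H: "H \<in> carrier_mat k r"
    and det: "det (four_block_mat P F H (0\<^sub>m k k)) \<noteq> 0"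
  shows "\<exists>X \<in> carrier_mat r k. H * X = 1\<^sub>m k"
proof -
  let ?M = "four_block_mat P F H (0\<^sub>m k k)"
  have "?M \<in> carrier_mat (r + k) (r + k)" using P F H by auto
  from det_non_zero_imp_unit[OF this det, of "()"]
  obtain N where N: "N \<in> carrier_mat (r + k) (r + k)" and MN: "?M * N = 1\<^sub>m (r + k)"
    unfolding Units_def ring_mat_def by auto
  obtain N1 N2 N3 N4 where "split_block N r r = (N1, N2, N3, N4)"
    by (cases "split_block N r r") auto
  from split_block[OF this, of k k] N
  have N1: "N1 \<in> carrier_mat r r" and N2: "N2 \<in> carrier_mat r k"
    and N3: "N3 \<in> carrier_mat k r" and N4: "N4 \<in> carrier_mat k k"
    and N_blocks: "N = four_block_mat N1 N2 N3 N4" by auto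
  have MN_blocks: "?M * N = four_block_mat (P * N1 + F * N3) (P * N2 + F * N4) (H * N1) (H * N2)"
    unfolding N_blocks using mult_four_block_mat[OF P F H zero_carrier_mat N1 N2 N3 N4] N1 N2 N3 N4 H
    by simp
  have "split_block (?M * N) r r = (P * N1 + F * N3, P * N2 + F * N4, H * N1, H * N2)"
    unfolding MN_blocks by (rule split_block_four_block_mat) (use P F H N1 N2 N3 N4 in auto)
  moreover have "split_block (1\<^sub>m (r + k)) r r = (1\<^sub>m r, 0\<^sub>m r k, 0\<^sub>m k r, 1\<^sub>m k)"
    unfolding four_block_one_mat[symmetric] by (rule split_block_four_block_mat) auto
  ultimately have "H * N2 = 1\<^sub>m k" using MN by (metis prod.inject)
  with N2 show ?thesis by blast
qed

theorem theorem1: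
  fixes n m p k q :: nat
    and A B C T Tinv A11 A12 A21 A22 G1 G2 L F G :: "real mat"
  assumes A: "A \<in> carrier_mat n n"
    and B: "B \<in> carrier_mat n m"
    and C: "C \<in> carrier_mat p n"
    and rankC: "mat_rank C = p"
    and T: "T \<in> carrier_mat n n"
    and Tinv: "Tinv \<in> carrier_mat n n"
    and Tinv_left: "Tinv * T = 1\<^sub>m n"
    and Tinv_right: "T * Tinv = 1\<^sub>m n"
    and CT: "C * T = four_block_mat (1\<^sub>m p) (0\<^sub>m p (n - p)) (0\<^sub>m 0 p) (0\<^sub>m 0 (n - p))"
    and Ablocks: "split_block (Tinv * A * T) p p = (A11, A12, A21, A22)"
    and Bblocks: "split_block (Tinv * B) p m = (G1, 0\<^sub>m p 0, G2, 0\<^sub>m (n - p) 0)"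
    and L: "L \<in> carrier_mat (n - p) p"
    and F: "F \<in> carrier_mat (n - p) k"
    and G: "G \<in> carrier_mat k p"
    and q: "q = mat_rank A12"
    and obs: "RO_PI_observer A12 A22 L F G"
  shows "mat_rank G = k \<and> q \<ge> k"
proof -
  have "p \<le> n" using vec_space.rank_le_nc[OF C] rankC C unfolding mat_rank_def by simp
  then have "dim_row (Tinv * A * T) = p + (n - p)" "dim_col (Tinv * A * T) = p + (n - p)"
    using Tinv A T by auto
  from split_block[OF Ablocks this]
  have A12: "A12 \<in> carrier_mat p (n - p)" and A22: "A22 \<in> carrier_mat (n - p) (n - p)" by auto
  have P: "A22 - L * A12 \<in> carrier_mat (n - p) (n - p)" using A22 L A12 by auto
  have H: "- (G * A12) \<in> carrier_mat k (n - p)" using G A12 by auto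
  have "pi_observer_matrix A12 A22 L F G \<in> carrier_mat (n - p + k) (n - p + k)"
    unfolding pi_observer_matrix_def using P F H G by auto
  from hurwitz_imp_det_nonzero[OF this] obs
  have "det (four_block_mat (A22 - L * A12) F (- (G * A12)) (0\<^sub>m k k)) \<noteq> 0"
    using G unfolding RO_PI_observer_def pi_observer_matrix_def by simp
  from lower_left_block_right_invertible[OF P F H this]
  obtain X where X: "X \<in> carrier_mat (n - p) k" and "- (G * A12) * X = 1\<^sub>m k" by blast
  then have GY: "G * (A12 * - X) = 1\<^sub>m k" using G A12 X by simp
  have Y: "A12 * - X \<in> carrier_mat p k" using A12 X by auto
  have "mat_rank G = k"
    using vec_space.rank_right_invertible[OF G Y GY] G unfolding mat_rank_def by simp
  moreover have "k \<le> q"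
    using vec_space.rank_left_invertible[OF Y G GY] vec_space.rank_mult_le[OF A12, of "- X"] X A12
    unfolding q mat_rank_def by simp
  ultimately show ?thesis by simp
qed

end
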